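(* Let $(X_t)_{t\ge1}$ be i.i.d. random variables in $[0,1]$ with variance $\sigma^2>0$, fix $\alpha\in(0,1)$, and define $\widehat\mu_t$, $\widehat\sigma_t^2$ and $\lambda_t$ as follows: $\widehat\mu_0=1/2$ and $\widehat\sigma_0^2=1/4$, and for $t\ge1$, $\widehat\mu_t=(1/2+\sum_{i\le t}X_i)/(t+1)$, $\widehat\sigma_t^2=(1/4+\sum_{i\le t}(X_i-\widehat\mu_i)^2)/(t+1)$ and $\lambda_t=\sqrt{2\log(2/\alpha)/(\widehat\sigma_{t-1}^2\,t\log(1+t))}\wedge\frac12$. Then, almost surely, \[ \sum_{i\le t}(X_i-\widehat\mu_{i-1})^2\,\psi_E(\lambda_i)\sim\log(2/\alpha)\,\log\log t . \]
   Context: $\psi_E(x)=-\log(1-x)-x$ for $x\in[0,1)$. $f(t)\sim g(t)$ means $f(t)/g(t)\to1$ as $t\to\infty$. *)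

theory Defs
  imports "HOL-Probability.Probability" "HOL-Library.Landau_Symbols"
begin

definition psiE :: "real \<Rightarrow> real" where
  "psiE x = - ln (1 - x) - x"

definition mu_hat :: "(nat \<Rightarrow> 'a \<Rightarrow> real) \<Rightarrow> nat \<Rightarrow> 'a \<Rightarrow> real" where
  "mu_hat X t \<omega> = (1/2 + (\<Sum>i=1..t. X i \<omega>)) / (real t + 1)"

definition sigma2_hat :: "(nat \<Rightarrow> 'a \<Rightarrow> real) \<Rightarrow> nat \<Rightarrow> 'a \<Rightarrow> real" where
  "sigma2_hat X t \<omega> = (1/4 + (\<Sum>i=1..t. (X i \<omega> - mu_hat X i \<omega>)^2)) / (real t + 1)"

definition lam :: "real \<Rightarrow> (nat \<Rightarrow> 'a \<Rightarrow> real) \<Rightarrow> nat \<Rightarrow> 'a \<Rightarrow> real" where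
  "lam \<alpha> X t \<omega> = min (sqrt (2 * ln (2 / \<alpha>) /
      (sigma2_hat X (t - 1) \<omega> * real t * ln (1 + real t)))) (1/2)"

end

theory Submission
  imports Defs "HOL-Real_Asymp.Real_Asymp"
begin

text \<open>Since lambda_i tends to 0 and psi_E(x) ~ x^2/2 at 0, the i-th summand is
  log(2/alpha) w_i (X_i - mu_hat_(i-1))^2 / sigma2_hat_(i-1) (1 + o(1)), where w_i = 1/(i log(1+i)).
  By the strong law of large numbers (Hoeffding plus Borel-Cantelli, the variables being bounded)
  the running estimates converge to mu and sigma^2, so the summand is
  log(2/alpha) w_i ((X_i - mu)^2/sigma^2 + o(1)). The weights decrease, satisfy t w_(t+1) -> 0 and
  have partial sums log log t + O(1); summation by parts then shows that the w-weighted means of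
  (X_i - mu)^2/sigma^2 inherit its Cesaro limit 1, while the o(1) terms are negligible by
  Toeplitz's lemma.\<close>

section \<open>Weighted means\<close>

lemma weighted_sum_null_div:
  fixes v b W :: "nat \<Rightarrow> real"
  assumes v_nonneg: "\<And>i. v i \<ge> 0" and b: "b \<longlonglongrightarrow> 0"
    and W: "filterlim W at_top sequentially" and v_sum_le: "\<And>t. (\<Sum>i=1..t. v i) \<le> W t"
  shows "(\<lambda>t. (\<Sum>i=1..t. v i * b i) / W t) \<longlonglongrightarrow> 0"
proof (rule tendstoI)
  fix e :: real assume e: "e > 0"
  obtain N where N: "\<And>i. i \<ge> N \<Longrightarrow> \<bar>b i\<bar> \<le> e / 2"
    using b e unfolding LIMSEQ_def dist_real_def by (metis diff_zero half_gt_zero less_eq_real_def)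
  define K where "K = (\<Sum>i<N. v i * \<bar>b i\<bar>)"
  have bound: "\<bar>\<Sum>i=1..t. v i * b i\<bar> \<le> K + e / 2 * W t" for t
  proof -
    have "\<bar>\<Sum>i=1..t. v i * b i\<bar> \<le> (\<Sum>i=1..t. v i * \<bar>b i\<bar>)"
      by (rule order_trans[OF sum_abs]) (simp add: abs_mult v_nonneg)
    also have "\<dots> \<le> (\<Sum>i=1..t. (if i < N then v i * \<bar>b i\<bar> else 0) + e / 2 * v i)"
    proof (rule sum_mono)
      fix i
      have "i \<ge> N \<Longrightarrow> v i * \<bar>b i\<bar> \<le> v i * (e / 2)"
        using N v_nonneg by (intro mult_left_mono)
      then show "v i * \<bar>b i\<bar> \<le> (if i < N then v i * \<bar>b i\<bar> else 0) + e / 2 * v i"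
        using v_nonneg[of i] e by (cases "i < N") (simp_all add: mult.commute)
    qed
    also have "\<dots> = (\<Sum>i\<in>{1..t} \<inter> {..<N}. v i * \<bar>b i\<bar>) + e / 2 * (\<Sum>i=1..t. v i)"
      by (simp add: sum.distrib sum_distrib_left sum.inter_restrict)
    also have "\<dots> \<le> K + e / 2 * W t"
      unfolding K_def using v_nonneg v_sum_le[of t] e
      by (intro add_mono sum_mono2 mult_left_mono) auto
    finally show ?thesis .
  qed
  have "\<forall>\<^sub>F t in sequentially. W t > 2 * K / e"
    using W by (simp add: filterlim_at_top_dense)
  then show "\<forall>\<^sub>F t in sequentially. dist ((\<Sum>i=1..t. v i * b i) / W t) 0 < e"
  proof eventually_elim
    case (elim t)
    have "K \<ge> 0" unfolding K_def using v_nonneg by (intro sum_nonneg) auto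
    then have W_pos: "W t > 0" using elim e
      by (metis divide_nonneg_pos mult_nonneg_nonneg order_le_less_trans zero_le_numeral)
    have "K < e / 2 * W t" using elim e by (simp add: field_simps)
    then show ?case using bound[of t] W_pos by (simp add: abs_divide pos_divide_less_eq)
  qed
qed

lemma summation_by_parts:
  fixes w d :: "nat \<Rightarrow> real"
  shows "(\<Sum>i=1..t. w i * d i) =
    w (Suc t) * (\<Sum>j=1..t. d j) + (\<Sum>i=1..t. (w i - w (Suc i)) * (\<Sum>j=1..i. d j))"
  by (induction t) (simp_all add: algebra_simps)

lemma weighted_mean_null:
  fixes w d :: "nat \<Rightarrow> real"
  assumes w_nonneg: "\<And>i. w i \<ge> 0" and w_antimono: "\<And>i. i \<ge> 1 \<Longrightarrow> w (Suc i) \<le> w i"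
    and w_tail: "(\<lambda>t. real t * w (Suc t)) \<longlonglongrightarrow> 0"
    and W: "filterlim (\<lambda>t. \<Sum>i=1..t. w i) at_top sequentially"
    and d: "(\<lambda>t. (\<Sum>j=1..t. d j) / real t) \<longlonglongrightarrow> 0"
  shows "(\<lambda>t. (\<Sum>i=1..t. w i * d i) / (\<Sum>i=1..t. w i)) \<longlonglongrightarrow> 0"
proof -
  define W where "W t = (\<Sum>i=1..t. w i)" for t
  define v where "v i = (w i - w (Suc i)) * real i" for i
  define b where "b i = (\<Sum>j=1..i. d j) / real i" for i
  have parts: "(\<Sum>i=1..t. w i * d i) = real t * w (Suc t) * b t + (\<Sum>i=1..t. v i * b i)" for t
    unfolding summation_by_parts[of w d t]
    by (cases "t = 0") (auto simp: v_def b_def intro!: sum.cong)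
  have "(\<lambda>t. real t * w (Suc t) * b t / W t) \<longlonglongrightarrow> 0"
    using tendsto_mult[OF w_tail d[folded b_def]] W filterlim_at_top_imp_at_infinity
    by (intro tendsto_divide_0) (auto simp: W_def)
  moreover have "(\<lambda>t. (\<Sum>i=1..t. v i * b i) / W t) \<longlonglongrightarrow> 0"
  proof (rule weighted_sum_null_div[OF _ d[folded b_def]])
    show "0 \<le> v i" for i using w_antimono[of i] by (cases "i = 0") (simp_all add: v_def)
    show "filterlim W at_top sequentially" using W by (simp add: W_def[abs_def])
    have "(\<Sum>i=1..t. v i) = W t - real t * w (Suc t)" for t
      by (induction t) (simp_all add: v_def W_def algebra_simps)
    then show "(\<Sum>i=1..t. v i) \<le> W t" for t using w_nonneg[of "Suc t"] by simp
  qed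
  ultimately have "(\<lambda>t. (\<Sum>i=1..t. w i * d i) / W t) \<longlonglongrightarrow> 0"
    unfolding parts add_divide_distrib by (rule tendsto_add_zero)
  then show ?thesis by (simp add: W_def)
qed

lemma weighted_mean_tendsto:
  fixes w a b :: "nat \<Rightarrow> real"
  assumes w_nonneg: "\<And>i. w i \<ge> 0" and w_antimono: "\<And>i. i \<ge> 1 \<Longrightarrow> w (Suc i) \<le> w i"
    and w_tail: "(\<lambda>t. real t * w (Suc t)) \<longlonglongrightarrow> 0"
    and W: "filterlim (\<lambda>t. \<Sum>i=1..t. w i) at_top sequentially"
    and a: "(\<lambda>t. (\<Sum>i=1..t. a i) / real t) \<longlonglongrightarrow> A" and b: "b \<longlonglongrightarrow> 0"
  shows "(\<lambda>t. (\<Sum>i=1..t. w i * (a i + b i)) / (\<Sum>i=1..t. w i)) \<longlonglongrightarrow> A"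
proof -
  define W where "W t = (\<Sum>i=1..t. w i)" for t
  define D where "D t = (\<Sum>i=1..t. w i * (a i - A)) / W t" for t
  define E where "E t = (\<Sum>i=1..t. w i * b i) / W t" for t
  have "(\<lambda>t. (\<Sum>i=1..t. a i) / real t - A) \<longlonglongrightarrow> 0"
    using tendsto_diff[OF a tendsto_const[of A]] by simp
  then have "(\<lambda>t. (\<Sum>i=1..t. a i - A) / real t) \<longlonglongrightarrow> 0"
    by (rule Lim_transform_eventually)
      (use eventually_ge_at_top[of "1::nat"] in \<open>eventually_elim, simp add: sum_subtractf diff_divide_distrib\<close>)
  then have "D \<longlonglongrightarrow> 0"
    unfolding D_def[abs_def] W_def
    using weighted_mean_null[of w "\<lambda>i. a i - A"] w_nonneg w_antimono w_tail W by blast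
  moreover have "E \<longlonglongrightarrow> 0"
    unfolding E_def[abs_def] W_def by (rule weighted_sum_null_div[OF w_nonneg b W order_refl])
  ultimately have "(\<lambda>t. A + D t + E t) \<longlonglongrightarrow> A"
    using tendsto_add[OF tendsto_add[OF tendsto_const[of A]]] by fastforce
  moreover have "\<forall>\<^sub>F t in sequentially. A + D t + E t = (\<Sum>i=1..t. w i * (a i + b i)) / W t"
    using W[unfolded filterlim_at_top_dense, rule_format, of 0]
  proof eventually_elim
    case (elim t)
    have "(\<Sum>i=1..t. w i * (a i + b i)) = A * W t + (\<Sum>i=1..t. w i * (a i - A)) + (\<Sum>i=1..t. w i * b i)"
      by (simp add: W_def sum_distrib_left algebra_simps sum.distrib sum_subtractf)
    then show ?case using elim by (simp add: D_def E_def W_def field_simps)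
  qed
  ultimately show ?thesis
    unfolding W_def by (rule Lim_transform_eventually)
qed
section \<open>The weights \<open>1 / (i ln (1 + i))\<close>\<close>

definition loglog_weight :: "nat \<Rightarrow> real" where
  "loglog_weight i = 1 / (real i * ln (1 + real i))"

lemma loglog_weight_nonneg: "loglog_weight i \<ge> 0"
  unfolding loglog_weight_def by simp

lemma loglog_weight_pos: "i \<ge> 1 \<Longrightarrow> loglog_weight i > 0"
  unfolding loglog_weight_def by simp

lemma loglog_weight_antimono:
  assumes "i \<ge> 1"
  shows "loglog_weight (Suc i) \<le> loglog_weight i"
  unfolding loglog_weight_def using assms
  by (intro frac_le mult_mono mult_pos_pos) auto

lemma loglog_weight_tendsto_zero: "loglog_weight \<longlonglongrightarrow> 0"
  unfolding loglog_weight_def by real_asymp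

lemma loglog_weight_tail: "(\<lambda>t. real t * loglog_weight (Suc t)) \<longlonglongrightarrow> 0"
  unfolding loglog_weight_def by (simp add: of_nat_Suc) real_asymp

lemma ln_diff_bounds:
  fixes x y :: real
  assumes "0 < x" "x < y"
  shows "(y - x) / y \<le> ln y - ln x" "ln y - ln x \<le> (y - x) / x"
proof -
  have "ln (y / x) \<le> y / x - 1" "ln (x / y) \<le> x / y - 1"
    using assms by (intro ln_le_minus_one; simp)+
  then show "(y - x) / y \<le> ln y - ln x" "ln y - ln x \<le> (y - x) / x"
    using assms by (simp_all add: ln_div diff_divide_distrib)
qed

lemma ln_ln_increment_bounds:
  fixes x :: real
  assumes "x > 1"
  shows "1 / ((x + 1) * ln (x + 1)) \<le> ln (ln (x + 1)) - ln (ln x)"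
    and "ln (ln (x + 1)) - ln (ln x) \<le> 1 / (x * ln x)"
proof -
  have ln_pos: "0 < ln x" and ln_less: "ln x < ln (x + 1)"
    using assms by simp_all
  have "1 / (x + 1) \<le> ln (x + 1) - ln x" "ln (x + 1) - ln x \<le> 1 / x"
    using ln_diff_bounds[of x "x + 1"] assms by simp_all
  then have "(1 / (x + 1)) / ln (x + 1) \<le> (ln (x + 1) - ln x) / ln (x + 1)"
    and "(ln (x + 1) - ln x) / ln x \<le> (1 / x) / ln x"
    using ln_pos ln_less by (intro divide_right_mono; simp)+
  with ln_diff_bounds[OF ln_pos ln_less]
  show "1 / ((x + 1) * ln (x + 1)) \<le> ln (ln (x + 1)) - ln (ln x)"
    and "ln (ln (x + 1)) - ln (ln x) \<le> 1 / (x * ln x)"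
    by simp_all
qed

text \<open>Both the weight \<open>loglog_weight (n + 1)\<close> and the increment of \<open>ln (ln (n + 1))\<close> lie
  between \<open>h (n + 1)\<close> and \<open>h n\<close>, where \<open>h n = 1 / ((n + 1) ln (n + 1))\<close>; the errors
  therefore telescope.\<close>

lemma loglog_weight_sum_minus_ln_ln_bounded:
  "\<exists>C. \<forall>t\<ge>1. \<bar>(\<Sum>i=1..t. loglog_weight i) - ln (ln (real t + 1))\<bar> \<le> C"
proof -
  define h where "h n = 1 / ((real n + 1) * ln (real n + 1))" for n :: nat
  define D where "D t = (\<Sum>i=1..t. loglog_weight i) - ln (ln (real t + 1))" for t
  have increment: "\<bar>D (Suc n) - D n\<bar> \<le> h n - h (Suc n)" if n: "n \<ge> 1" for n
  proof -
    have "h (Suc n) \<le> loglog_weight (Suc n)" "loglog_weight (Suc n) \<le> h n"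
      unfolding h_def loglog_weight_def using n
      by (auto simp: add.commute intro!: frac_le mult_mono mult_pos_pos)
    moreover have "h (Suc n) \<le> ln (ln (real n + 2)) - ln (ln (real n + 1))"
      "ln (ln (real n + 2)) - ln (ln (real n + 1)) \<le> h n"
      using ln_ln_increment_bounds[of "real n + 1"] n by (simp_all add: h_def add_ac)
    moreover have "D (Suc n) - D n = loglog_weight (Suc n) - (ln (ln (real n + 2)) - ln (ln (real n + 1)))"
      by (simp add: D_def add_ac)
    ultimately show ?thesis by linarith
  qed
  have telescoped: "\<bar>D t - D 1\<bar> \<le> h 1 - h t" if "t \<ge> 1" for t
    using that
  proof (induction t rule: dec_induct)
    case (step n)
    then show ?case using increment[of n] by linarith
  qed simp
  have "\<bar>D t\<bar> \<le> \<bar>D 1\<bar> + h 1" if "t \<ge> 1" for t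
  proof -
    have "h t \<ge> 0" by (simp add: h_def)
    with telescoped[OF that] show ?thesis by linarith
  qed
  then show ?thesis unfolding D_def by blast
qed

lemma loglog_weight_sum_asymp_ln_ln:
  "(\<lambda>t. (\<Sum>i=1..t. loglog_weight i) / ln (ln (real t))) \<longlonglongrightarrow> 1"
proof -
  obtain C where C: "\<And>t. t \<ge> 1 \<Longrightarrow> \<bar>(\<Sum>i=1..t. loglog_weight i) - ln (ln (real t + 1))\<bar> \<le> C"
    using loglog_weight_sum_minus_ln_ln_bounded by blast
  have "(\<lambda>t. ((\<Sum>i=1..t. loglog_weight i) - ln (ln (real t + 1))) / ln (ln (real t))) \<longlonglongrightarrow> 0"
  proof (rule Lim_null_comparison)
    show "(\<lambda>t. C / ln (ln (real t))) \<longlonglongrightarrow> 0" by real_asymp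
    have "\<forall>\<^sub>F t in sequentially. ln (ln (real t)) > 0" by real_asymp
    then show "\<forall>\<^sub>F t in sequentially.
        norm (((\<Sum>i=1..t. loglog_weight i) - ln (ln (real t + 1))) / ln (ln (real t)))
          \<le> C / ln (ln (real t))"
      using eventually_ge_at_top[of 1]
    proof eventually_elim
      case (elim t)
      then show ?case using C[of t] by (simp add: abs_divide divide_right_mono)
    qed
  qed
  moreover have "(\<lambda>t. ln (ln (real t + 1)) / ln (ln (real t))) \<longlonglongrightarrow> 1" by real_asymp
  ultimately show ?thesis
    using tendsto_add by (fastforce simp flip: add_divide_distrib)
qed

lemma loglog_weight_sum_at_top:
  "filterlim (\<lambda>t. \<Sum>i=1..t. loglog_weight i) at_top sequentially"
proof -
  have "filterlim (\<lambda>t. (\<Sum>i=1..t. loglog_weight i) / ln (ln (real t)) * ln (ln (real t))) at_top sequentially"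
    by (rule filterlim_tendsto_pos_mult_at_top[OF loglog_weight_sum_asymp_ln_ln]) (simp, real_asymp)
  moreover have "\<forall>\<^sub>F t in sequentially. ln (ln (real t)) > 0" by real_asymp
  ultimately show ?thesis
    by (elim filterlim_cong[THEN iffD1, rotated 3]) (auto elim: eventually_mono)
qed

section \<open>The running estimates along a typical path\<close>

lemma tendsto_shifted_mean:
  fixes S :: "nat \<Rightarrow> real"
  assumes "(\<lambda>t. S t / real t) \<longlonglongrightarrow> L"
  shows "(\<lambda>t. (a + S t) / (real t + 1)) \<longlonglongrightarrow> L"
proof -
  have "(\<lambda>t. a / (real t + 1) + S t / real t * (real t / (real t + 1))) \<longlonglongrightarrow> 0 + L * 1"
    by (intro tendsto_intros assms; real_asymp)
  then have "(\<lambda>t. a / (real t + 1) + S t / real t * (real t / (real t + 1))) \<longlonglongrightarrow> L"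
    by simp
  moreover have "\<forall>\<^sub>F t in sequentially.
      a / (real t + 1) + S t / real t * (real t / (real t + 1)) = (a + S t) / (real t + 1)"
    using eventually_gt_at_top[of 0] by eventually_elim (simp add: add_divide_distrib)
  ultimately show ?thesis by (rule Lim_transform_eventually)
qed

lemma psiE_over_square_tendsto: "((\<lambda>x. psiE x / x^2) \<longlongrightarrow> 1/2) (at_right 0)"
  unfolding psiE_def by real_asymp

lemma square_diff_le:
  fixes a b c :: real
  assumes "a \<in> {0..1}" "b \<in> {0..1}" "c \<in> {0..1}"
  shows "\<bar>(a - b)^2 - (a - c)^2\<bar> \<le> 2 * \<bar>b - c\<bar>"
proof -
  have "\<bar>(a - b)^2 - (a - c)^2\<bar> = \<bar>b - c\<bar> * \<bar>b + c - 2 * a\<bar>"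
    by (simp add: power2_eq_square algebra_simps flip: abs_mult)
  also have "\<dots> \<le> \<bar>b - c\<bar> * 2"
    using assms by (intro mult_left_mono) (auto simp: abs_le_iff)
  finally show ?thesis by simp
qed

lemma deviation_product_tendsto_zero:
  fixes x m Q :: "nat \<Rightarrow> real"
  assumes range: "\<forall>\<^sub>F i in sequentially. x i \<in> {0..1} \<and> m i \<in> {0..1}" and "\<mu> \<in> {0..1}"
    and m: "m \<longlonglongrightarrow> \<mu>" and Q: "Q \<longlonglongrightarrow> q"
  shows "(\<lambda>i. (x i - m i)^2 * Q i - (x i - \<mu>)^2 * q) \<longlonglongrightarrow> 0"
proof (rule Lim_null_comparison)
  have "(\<lambda>i. 2 * \<bar>m i - \<mu>\<bar> * \<bar>Q i\<bar> + \<bar>Q i - q\<bar>) \<longlonglongrightarrow> 2 * \<bar>\<mu> - \<mu>\<bar> * \<bar>q\<bar> + \<bar>q - q\<bar>"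
    by (intro tendsto_intros m Q)
  then show "(\<lambda>i. 2 * \<bar>m i - \<mu>\<bar> * \<bar>Q i\<bar> + \<bar>Q i - q\<bar>) \<longlonglongrightarrow> 0" by simp
  show "\<forall>\<^sub>F i in sequentially.
      norm ((x i - m i)^2 * Q i - (x i - \<mu>)^2 * q) \<le> 2 * \<bar>m i - \<mu>\<bar> * \<bar>Q i\<bar> + \<bar>Q i - q\<bar>"
    using range
  proof eventually_elim
    case (elim i)
    have "(x i - \<mu>)^2 \<le> 1"
      using elim \<open>\<mu> \<in> {0..1}\<close> by (auto simp: abs_le_iff intro!: abs_square_le_1[THEN iffD2])
    moreover have "\<bar>(x i - m i)^2 - (x i - \<mu>)^2\<bar> \<le> 2 * \<bar>m i - \<mu>\<bar>"
      using elim \<open>\<mu> \<in> {0..1}\<close> by (intro square_diff_le) auto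
    moreover have "(x i - m i)^2 * Q i - (x i - \<mu>)^2 * q
        = ((x i - m i)^2 - (x i - \<mu>)^2) * Q i + (x i - \<mu>)^2 * (Q i - q)"
      by (simp add: algebra_simps)
    ultimately show ?case
      by (auto simp: abs_mult intro!: order_trans[OF abs_triangle_ineq] add_mono mult_mono
          mult_left_le_one_le)
  qed
qed

lemma mu_hat_in_unit:
  assumes "\<And>i. i \<ge> 1 \<Longrightarrow> X i \<omega> \<in> {0..1}"
  shows "mu_hat X t \<omega> \<in> {0..1}"
proof -
  have "0 \<le> (\<Sum>i=1..t. X i \<omega>)" "(\<Sum>i=1..t. X i \<omega>) \<le> (\<Sum>i=1..t. 1)"
    using assms by (intro sum_nonneg sum_mono; simp)+
  then show ?thesis by (simp add: mu_hat_def field_simps)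
qed

lemma sigma2_hat_pos: "sigma2_hat X t \<omega> > 0"
proof -
  have "0 \<le> (\<Sum>i=1..t. (X i \<omega> - mu_hat X i \<omega>)^2)" by (intro sum_nonneg) simp
  then show ?thesis unfolding sigma2_hat_def by (intro divide_pos_pos) simp_all
qed

context
  fixes X :: "nat \<Rightarrow> 'a \<Rightarrow> real" and \<omega> :: 'a and \<mu> :: real
  assumes range: "\<And>i. i \<ge> 1 \<Longrightarrow> X i \<omega> \<in> {0..1}"
    and mean: "(\<lambda>n. (\<Sum>i=1..n. X i \<omega>) / real n) \<longlonglongrightarrow> \<mu>"
begin

lemma mean_limit_in_unit: "\<mu> \<in> {0..1}"
proof -
  have "0 \<le> (\<Sum>i=1..n. X i \<omega>)" "(\<Sum>i=1..n. X i \<omega>) \<le> real n" for n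
    using sum_mono[of "{1..n}" "\<lambda>i. X i \<omega>" "\<lambda>_. 1"] range by (auto intro!: sum_nonneg)
  then show ?thesis
    using LIMSEQ_le_const[OF mean] LIMSEQ_le_const2[OF mean]
    by (force simp: divide_le_eq)
qed

lemma mu_hat_tendsto: "(\<lambda>t. mu_hat X t \<omega>) \<longlonglongrightarrow> \<mu>"
  unfolding mu_hat_def by (rule tendsto_shifted_mean[OF mean])

context
  fixes \<sigma>2 :: real
  assumes var: "(\<lambda>n. (\<Sum>i=1..n. (X i \<omega> - \<mu>)^2) / real n) \<longlonglongrightarrow> \<sigma>2"
begin

lemma sigma2_hat_tendsto: "(\<lambda>t. sigma2_hat X t \<omega>) \<longlonglongrightarrow> \<sigma>2"
  unfolding sigma2_hat_def
proof (rule tendsto_shifted_mean)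
  define e where "e i = (X i \<omega> - mu_hat X i \<omega>)^2 * 1 - (X i \<omega> - \<mu>)^2 * 1" for i
  have "\<forall>\<^sub>F i in sequentially. X i \<omega> \<in> {0..1} \<and> mu_hat X i \<omega> \<in> {0..1}"
    using eventually_ge_at_top[of 1] by eventually_elim (use range mu_hat_in_unit[of X \<omega>, OF range] in blast)
  then have "e \<longlonglongrightarrow> 0" unfolding e_def[abs_def]
    by (intro deviation_product_tendsto_zero mu_hat_tendsto tendsto_const mean_limit_in_unit)
  then have "(\<lambda>t. (\<Sum>i=1..t. 1 * e i) / real t) \<longlonglongrightarrow> 0"
    by (intro weighted_sum_null_div filterlim_real_sequentially) auto
  from tendsto_add[OF var this]
  show "(\<lambda>t. (\<Sum>i=1..t. (X i \<omega> - mu_hat X i \<omega>)^2) / real t) \<longlonglongrightarrow> \<sigma>2"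
    by (simp add: e_def sum_subtractf flip: add_divide_distrib)
qed

lemma psiE_lam_asymp:
  assumes "\<sigma>2 > 0" and "0 < \<alpha>" and "\<alpha> < 2"
  shows "(\<lambda>i. psiE (lam \<alpha> X i \<omega>) / (ln (2 / \<alpha>) * loglog_weight i)) \<longlonglongrightarrow> 1 / \<sigma>2"
proof -
  define c where "c = ln (2 / \<alpha>)"
  have "c > 0" using assms by (simp add: c_def)
  define s where "s i = sigma2_hat X (i - 1) \<omega>" for i
  have s: "s \<longlonglongrightarrow> \<sigma>2"
    unfolding s_def by (rule filterlim_compose[OF sigma2_hat_tendsto filterlim_minus_const_nat_at_top])
  define g where "g i = 2 * c * loglog_weight i / s i" for i
  have lam_eq: "lam \<alpha> X i \<omega> = min (sqrt (g i)) (1/2)" for i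
    by (simp add: lam_def g_def loglog_weight_def c_def s_def field_simps)
  have "g \<longlonglongrightarrow> 2 * c * 0 / \<sigma>2"
    unfolding g_def by (intro tendsto_intros loglog_weight_tendsto_zero s) (use assms in simp)
  then have sqrt_g: "(\<lambda>i. sqrt (g i)) \<longlonglongrightarrow> 0"
    using tendsto_real_sqrt by fastforce
  have "\<forall>\<^sub>F i in sequentially. sqrt (g i) < 1/2"
    by (rule order_tendstoD(2)[OF sqrt_g]) simp
  then have "\<forall>\<^sub>F i in sequentially. lam \<alpha> X i \<omega> = sqrt (g i) \<and> g i > 0 \<and> loglog_weight i > 0"
    using eventually_ge_at_top[of 1]
    by eventually_elim
      (auto simp: lam_eq g_def s_def \<open>c > 0\<close> loglog_weight_pos sigma2_hat_pos)
  note lam_sqrt = this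
  then have "filterlim (\<lambda>i. lam \<alpha> X i \<omega>) (at_right 0) sequentially"
    by (intro tendsto_imp_filterlim_at_right Lim_transform_eventually[OF sqrt_g])
      (auto elim: eventually_mono)
  moreover have "(\<lambda>i. 2 / s i) \<longlonglongrightarrow> 2 / \<sigma>2"
    using s assms by (intro tendsto_intros) auto
  ultimately have "(\<lambda>i. psiE (lam \<alpha> X i \<omega>) / (lam \<alpha> X i \<omega>)^2 * (2 / s i)) \<longlonglongrightarrow> 1/2 * (2 / \<sigma>2)"
    by (intro tendsto_mult filterlim_compose[OF psiE_over_square_tendsto])
  then have "(\<lambda>i. psiE (lam \<alpha> X i \<omega>) / (lam \<alpha> X i \<omega>)^2 * (2 / s i)) \<longlonglongrightarrow> 1 / \<sigma>2"
    by simp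
  moreover have "\<forall>\<^sub>F i in sequentially. psiE (lam \<alpha> X i \<omega>) / (lam \<alpha> X i \<omega>)^2 * (2 / s i)
      = psiE (lam \<alpha> X i \<omega>) / (c * loglog_weight i)"
    using lam_sqrt
  proof eventually_elim
    case (elim i)
    then have "(lam \<alpha> X i \<omega>)^2 = 2 * c * loglog_weight i / s i" by (simp add: g_def)
    then show ?case using elim \<open>c > 0\<close> sigma2_hat_pos[of X "i - 1" \<omega>]
      by (simp add: s_def field_simps)
  qed
  ultimately show ?thesis unfolding c_def by (rule Lim_transform_eventually)
qed

lemma psiE_sum_over_weight_sum_tendsto:
  assumes "\<sigma>2 > 0" and "0 < \<alpha>" and "\<alpha> < 2"
  shows "(\<lambda>t. (\<Sum>i=1..t. (X i \<omega> - mu_hat X (i - 1) \<omega>)^2 * psiE (lam \<alpha> X i \<omega>))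
    / (ln (2 / \<alpha>) * (\<Sum>i=1..t. loglog_weight i))) \<longlonglongrightarrow> 1"
proof -
  define c where "c = ln (2 / \<alpha>)"
  have "c > 0" using assms by (simp add: c_def)
  define Q where "Q i = psiE (lam \<alpha> X i \<omega>) / (c * loglog_weight i)" for i
  define y where "y i = (X i \<omega> - \<mu>)^2 * (1 / \<sigma>2)" for i
  define z where "z i = (X i \<omega> - mu_hat X (i - 1) \<omega>)^2 * Q i - y i" for i
  have "(\<lambda>t. (\<Sum>i=1..t. y i) / real t) \<longlonglongrightarrow> \<sigma>2 * (1 / \<sigma>2)"
    unfolding y_def sum_distrib_right[symmetric] times_divide_eq_left[symmetric]
    by (intro tendsto_intros var)
  then have y: "(\<lambda>t. (\<Sum>i=1..t. y i) / real t) \<longlonglongrightarrow> 1"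
    using assms by simp
  have "\<forall>\<^sub>F i in sequentially. X i \<omega> \<in> {0..1} \<and> mu_hat X (i - 1) \<omega> \<in> {0..1}"
    using eventually_ge_at_top[of 1]
    by eventually_elim (use range mu_hat_in_unit[of X \<omega>, OF range] in blast)
  then have z: "z \<longlonglongrightarrow> 0"
    unfolding z_def[abs_def] y_def Q_def c_def
    by (intro deviation_product_tendsto_zero mean_limit_in_unit psiE_lam_asymp assms
        filterlim_compose[OF mu_hat_tendsto filterlim_minus_const_nat_at_top])
  have sum_eq: "(\<Sum>i=1..t. (X i \<omega> - mu_hat X (i - 1) \<omega>)^2 * psiE (lam \<alpha> X i \<omega>))
      = c * (\<Sum>i=1..t. loglog_weight i * (y i + z i))" for t
    unfolding sum_distrib_left
  proof (rule sum.cong)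
    fix i assume "i \<in> {1..t}"
    then have "loglog_weight i > 0" by (intro loglog_weight_pos) simp
    then have "c \<noteq> 0" "loglog_weight i \<noteq> 0" using \<open>c > 0\<close> by auto
    then show "(X i \<omega> - mu_hat X (i - 1) \<omega>)^2 * psiE (lam \<alpha> X i \<omega>)
        = c * (loglog_weight i * (y i + z i))"
      by (simp add: z_def Q_def field_simps)
  qed simp
  have "(\<lambda>t. (\<Sum>i=1..t. loglog_weight i * (y i + z i)) / (\<Sum>i=1..t. loglog_weight i)) \<longlonglongrightarrow> 1"
    using weighted_mean_tendsto[of loglog_weight y 1 z] loglog_weight_nonneg loglog_weight_antimono
      loglog_weight_tail loglog_weight_sum_at_top y z
    by blast
  then show ?thesis
    unfolding sum_eq c_def[symmetric] using \<open>c > 0\<close> by simp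
qed

lemma psiE_sum_asymp_ln_ln:
  assumes "\<sigma>2 > 0" and "0 < \<alpha>" and "\<alpha> < 2"
  shows "(\<lambda>t. \<Sum>i=1..t. (X i \<omega> - mu_hat X (i - 1) \<omega>)^2 * psiE (lam \<alpha> X i \<omega>))
    \<sim>[sequentially] (\<lambda>t. ln (2 / \<alpha>) * ln (ln (real t)))"
proof -
  define c where "c = ln (2 / \<alpha>)"
  have "c > 0" using assms by (simp add: c_def)
  define S where "S t = (\<Sum>i=1..t. (X i \<omega> - mu_hat X (i - 1) \<omega>)^2 * psiE (lam \<alpha> X i \<omega>))" for t
  define W where "W t = (\<Sum>i=1..t. loglog_weight i)" for t
  have "(\<lambda>t. S t / (c * W t) * (c * (W t / ln (ln (real t))))) \<longlonglongrightarrow> 1 * (c * 1)"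
    using psiE_sum_over_weight_sum_tendsto[OF assms] loglog_weight_sum_asymp_ln_ln
    unfolding S_def W_def c_def by (intro tendsto_intros)
  moreover have "\<forall>\<^sub>F t in sequentially. S t / (c * W t) * (c * (W t / ln (ln (real t))))
      = S t / ln (ln (real t))"
    using loglog_weight_sum_at_top[folded W_def, unfolded filterlim_at_top_dense, rule_format, of 0]
    by eventually_elim (use \<open>c > 0\<close> in simp)
  ultimately have "(\<lambda>t. S t / ln (ln (real t))) \<longlonglongrightarrow> c"
    using Lim_transform_eventually by fastforce
  then show ?thesis
    unfolding S_def c_def by (rule asymp_equivI'_const) (use \<open>c > 0\<close> c_def in simp)
qed

end

end

section \<open>Strong law of large numbers for bounded i.i.d. variables\<close>

lemma (in prob_space) AE_eventually_mean_close:
  fixes Y :: "nat \<Rightarrow> 'a \<Rightarrow> real" and a b \<epsilon> :: real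
  assumes meas: "\<And>i. i \<ge> 1 \<Longrightarrow> Y i \<in> borel_measurable M"
    and indep: "indep_vars (\<lambda>_. borel) Y {1..}"
    and distr: "\<And>i. i \<ge> 1 \<Longrightarrow> distr M borel (Y i) = distr M borel (Y 1)"
    and range: "\<And>i \<omega>. i \<ge> 1 \<Longrightarrow> \<omega> \<in> space M \<Longrightarrow> Y i \<omega> \<in> {a..b}"
    and "a < b" and "\<epsilon> > 0"
  shows "AE \<omega> in M. \<forall>\<^sub>F n in sequentially. \<bar>(\<Sum>i=1..n. Y i \<omega>) / real n - expectation (Y 1)\<bar> < \<epsilon>"
proof -
  define A where
    "A n = {\<omega>\<in>space M. \<bar>(\<Sum>i=1..n. Y i \<omega>) / real n - expectation (Y 1)\<bar> \<ge> \<epsilon>}" for n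
  have A_sets: "A n \<in> sets M" for n
  proof -
    have "(\<lambda>\<omega>. \<bar>(\<Sum>i=1..n. Y i \<omega>) / real n - expectation (Y 1)\<bar>) \<in> borel_measurable M"
      using meas by (intro borel_measurable_abs borel_measurable_diff borel_measurable_divide
          borel_measurable_sum borel_measurable_const) auto
    then show ?thesis unfolding A_def by measurable
  qed
  define q where "q = exp (-2 * \<epsilon>^2 / (b - a)^2)"
  have Hoeffding: "measure M (A n) \<le> 2 * q ^ n" if "n \<ge> 1" for n
  proof -
    interpret Hoeffding_ineq_iid M "{1..n}" Y "Y 1" a b "expectation (Y 1)"
    proof unfold_locales
      show "indep_vars (\<lambda>_. borel) Y {1..n}" by (rule indep_vars_subset[OF indep]) auto
      show "random_variable borel (Y 1)" using meas by simp
      show "AE \<omega> in M. Y 1 \<omega> \<in> {a..b}" using range[of 1] by (intro AE_I2) simp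
      show "distr M borel (Y i) = distr M borel (Y 1)" if "i \<in> {1..n}" for i
        using that by (intro distr) simp
    qed simp_all
    have "{1..n} \<noteq> {}" using that by simp
    from Hoeffding_ineq_abs_ge'[OF _ \<open>a < b\<close> this, of \<epsilon>] \<open>\<epsilon> > 0\<close>
    have "measure M (A n) \<le> 2 * exp (-2 * real n * \<epsilon>^2 / (b - a)^2)"
      by (simp add: A_def)
    also have "exp (-2 * real n * \<epsilon>^2 / (b - a)^2) = exp (real n * (-2 * \<epsilon>^2 / (b - a)^2))"
      by (simp add: algebra_simps)
    also have "\<dots> = q ^ n" unfolding q_def by (rule exp_of_nat_mult)
    finally show ?thesis .
  qed
  have "q < 1" using \<open>a < b\<close> \<open>\<epsilon> > 0\<close> by (simp add: q_def)
  then have "summable (\<lambda>n. measure M (A n))"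
    using Hoeffding
    by (intro summable_comparison_test'[where N = 1, OF summable_mult[OF summable_geometric]])
       (auto simp: q_def)
  then have "AE \<omega> in M. \<forall>\<^sub>F n in sequentially. \<omega> \<in> space M - A n"
    by (intro borel_cantelli_AE1 A_sets) (auto simp: emeasure_eq_measure)
  then show ?thesis
    by (elim AE_mp, intro AE_I2 impI) (auto simp: A_def elim: eventually_mono)
qed

lemma (in prob_space) strong_law_bounded_iid:
  fixes Y :: "nat \<Rightarrow> 'a \<Rightarrow> real" and a b :: real
  assumes "\<And>i. i \<ge> 1 \<Longrightarrow> Y i \<in> borel_measurable M"
    and "indep_vars (\<lambda>_. borel) Y {1..}"
    and "\<And>i. i \<ge> 1 \<Longrightarrow> distr M borel (Y i) = distr M borel (Y 1)"
    and "\<And>i \<omega>. i \<ge> 1 \<Longrightarrow> \<omega> \<in> space M \<Longrightarrow> Y i \<omega> \<in> {a..b}"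
    and "a < b"
  shows "AE \<omega> in M. (\<lambda>n. (\<Sum>i=1..n. Y i \<omega>) / real n) \<longlonglongrightarrow> expectation (Y 1)"
proof -
  have "AE \<omega> in M. \<forall>k. \<forall>\<^sub>F n in sequentially.
      \<bar>(\<Sum>i=1..n. Y i \<omega>) / real n - expectation (Y 1)\<bar> < inverse (real (Suc k))"
    using AE_eventually_mean_close[OF assms] by (simp add: AE_all_countable)
  then show ?thesis
  proof (rule AE_mp, intro AE_I2 impI tendstoI)
    fix \<omega> and r :: real
    assume close: "\<forall>k. \<forall>\<^sub>F n in sequentially.
      \<bar>(\<Sum>i=1..n. Y i \<omega>) / real n - expectation (Y 1)\<bar> < inverse (real (Suc k))"
      and "r > 0"
    then obtain k where k: "inverse (real (Suc k)) < r"
      using reals_Archimedean by blast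
    from close have "\<forall>\<^sub>F n in sequentially.
        \<bar>(\<Sum>i=1..n. Y i \<omega>) / real n - expectation (Y 1)\<bar> < inverse (real (Suc k))" ..
    then show "\<forall>\<^sub>F n in sequentially. dist ((\<Sum>i=1..n. Y i \<omega>) / real n) (expectation (Y 1)) < r"
      by (rule eventually_mono) (use k in \<open>simp add: dist_real_def\<close>)
  qed
qed

lemma (in prob_space) distr_compose_eq:
  assumes "g \<in> borel_measurable borel" "X \<in> borel_measurable M" "X' \<in> borel_measurable M"
    and "distr M borel X = distr M borel X'"
  shows "distr M borel (\<lambda>\<omega>. g (X \<omega>)) = distr M borel (\<lambda>\<omega>. g (X' \<omega>))"
  using distr_distr[OF assms(1,2)] distr_distr[OF assms(1,3)] assms(4)
  by (simp add: comp_def)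

lemma (in prob_space) AE_Cesaro_mean_and_variance:
  fixes X :: "nat \<Rightarrow> 'a \<Rightarrow> real" and a b :: real
  assumes meas: "\<And>i. i \<ge> 1 \<Longrightarrow> X i \<in> borel_measurable M"
    and indep: "indep_vars (\<lambda>_. borel) X {1..}"
    and distr: "\<And>i. i \<ge> 1 \<Longrightarrow> distr M borel (X i) = distr M borel (X 1)"
    and range: "\<And>i \<omega>. i \<ge> 1 \<Longrightarrow> \<omega> \<in> space M \<Longrightarrow> X i \<omega> \<in> {a..b}"
    and "a < b"
  shows "AE \<omega> in M. (\<lambda>n. (\<Sum>i=1..n. X i \<omega>) / real n) \<longlonglongrightarrow> expectation (X 1)
    \<and> (\<lambda>n. (\<Sum>i=1..n. (X i \<omega> - expectation (X 1))^2) / real n) \<longlonglongrightarrow> variance (X 1)"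
proof -
  define \<mu> where "\<mu> = expectation (X 1)"
  define B where "B = (\<bar>a\<bar> + \<bar>b\<bar> + \<bar>\<mu>\<bar>)^2"
  have "AE \<omega> in M. (\<lambda>n. (\<Sum>i=1..n. (X i \<omega> - \<mu>)^2) / real n) \<longlonglongrightarrow> expectation (\<lambda>\<omega>. (X 1 \<omega> - \<mu>)^2)"
  proof (rule strong_law_bounded_iid[where Y = "\<lambda>i \<omega>. (X i \<omega> - \<mu>)^2" and a = 0 and b = B])
    show "indep_vars (\<lambda>_. borel) (\<lambda>i \<omega>. (X i \<omega> - \<mu>)^2) {1..}"
      by (rule indep_vars_compose2[OF indep]) measurable
    show "distr M borel (\<lambda>\<omega>. (X i \<omega> - \<mu>)^2) = distr M borel (\<lambda>\<omega>. (X 1 \<omega> - \<mu>)^2)" if "i \<ge> 1" for i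
      using meas[OF that] meas[of 1] distr[OF that]
      by (intro distr_compose_eq[where g = "\<lambda>x. (x - \<mu>)^2"]) auto
    show "(X i \<omega> - \<mu>)^2 \<in> {0..B}" if "i \<ge> 1" "\<omega> \<in> space M" for i \<omega>
    proof -
      have "\<bar>X i \<omega> - \<mu>\<bar> \<le> \<bar>a\<bar> + \<bar>b\<bar> + \<bar>\<mu>\<bar>"
        using range[OF that] by (simp add: abs_le_iff) linarith
      then have "\<bar>X i \<omega> - \<mu>\<bar>^2 \<le> B"
        unfolding B_def by (intro power_mono) auto
      then show ?thesis by simp
    qed
    show "(\<lambda>\<omega>. (X i \<omega> - \<mu>)^2) \<in> borel_measurable M" if "i \<ge> 1" for i
      using meas[OF that] by measurable
    show "0 < B" using \<open>a < b\<close> by (simp add: B_def)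
  qed
  moreover have "AE \<omega> in M. (\<lambda>n. (\<Sum>i=1..n. X i \<omega>) / real n) \<longlonglongrightarrow> \<mu>"
    unfolding \<mu>_def by (rule strong_law_bounded_iid[OF assms])
  ultimately show ?thesis by (auto simp: \<mu>_def)
qed

theorem mainTheorem16:
  fixes M :: "'a measure" and X :: "nat \<Rightarrow> 'a \<Rightarrow> real" and \<alpha> \<sigma>2 :: real
  assumes "prob_space M"
    and "\<And>i. i \<ge> 1 \<Longrightarrow> X i \<in> borel_measurable M"
    and "prob_space.indep_vars M (\<lambda>_. borel) X {1..}"
    and "\<And>i. i \<ge> 1 \<Longrightarrow> distr M borel (X i) = distr M borel (X 1)"
    and "\<And>i \<omega>. i \<ge> 1 \<Longrightarrow> \<omega> \<in> space M \<Longrightarrow> X i \<omega> \<in> {0..1}"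
    and "prob_space.variance M (X 1) = \<sigma>2" and "\<sigma>2 > 0"
    and "0 < \<alpha>" and "\<alpha> < 1"
  shows "AE \<omega> in M. (\<lambda>t. \<Sum>i=1..t. (X i \<omega> - mu_hat X (i - 1) \<omega>)^2 * psiE (lam \<alpha> X i \<omega>))
            \<sim>[sequentially] (\<lambda>t. ln (2 / \<alpha>) * ln (ln (real t)))"
proof -
  interpret prob_space M by fact
  have "AE \<omega> in M. (\<lambda>n. (\<Sum>i=1..n. X i \<omega>) / real n) \<longlonglongrightarrow> expectation (X 1)
    \<and> (\<lambda>n. (\<Sum>i=1..n. (X i \<omega> - expectation (X 1))^2) / real n) \<longlonglongrightarrow> variance (X 1)"
    using AE_Cesaro_mean_and_variance[where a = "0::real" and b = 1, OF assms(2-5)] by simp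
  with AE_space show ?thesis
  proof eventually_elim
    case (elim \<omega>)
    show ?case
      by (rule psiE_sum_asymp_ln_ln[of X \<omega> "expectation (X 1)" \<sigma>2])
        (use elim assms(5-9) in auto)
  qed
qed

end
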